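(* Let $E$ be a graph with finitely many vertices and $K$ a field of characteristic $0$. Let $H\subseteq E^0$ be hereditary and saturated, $w\in B_H$ a breaking vertex with $M(w)=E^0\setminus H$, and $P=I(H,B_H\setminus\{w\})$ (a primitive ideal of "type I"). Assume $L_K(E)/P$ is noncommutative. Then there exists $f\in E^1$ with $r(f)=w$ such that $\langle 1+2w^Hf^*,\ 1+2fw^H\rangle$ is a non-cyclic free subgroup of $L_K(E)^\times$.
   Context: A graph $E=(E^0,E^1,r,s)$; $L_K(E)$ is the free associative $K$-algebra on $E^0\cup E^1\cup\{e^*\}$ subject to $vv'=\delta_{v,v'}v$, $s(e)e=er(e)=e$, $r(e)e^*=e^*s(e)=e^*$, $e^*f=\delta_{e,f}r(e)$, and $v=\sum_{s(e)=v}ee^*$ for every regular vertex $v$ (emitting a finite nonzero number of edges); with $E^0$ finite it is unital with $1=\sum_v v$. Write $u\ge v$ if there is a path from $u$ to $v$; $M(v)=\{u\in E^0:u\ge v\}$. $H$ hereditary: $u\in H$, $u\ge v\Rightarrow v\in H$; saturated: for regular $v$, $r(s^{-1}(v))\subseteq H\Rightarrow v\in H$. A breaking vertex of $H$ is an infinite emitter $w\notin H$ with $1\le|s^{-1}(w)\cap r^{-1}(E^0\setminus H)|<\infty$; $B_H$ is the set of them; $w^H=w-\sum_{s(e)=w,\,r(e)\notin H}ee^*$. For $S\subseteq B_H$, $I(H,S)$ is the ideal of $L_K(E)$ generated by $H\cup\{v^H:v\in S\}$. *)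

theory Defs
  imports "HOL-Algebra.Algebra"
begin

text \<open>A graph E is given by a vertex type 'v (E^0 = UNIV, finite in the theorem),
an edge type 'e (E^1 = UNIV), and source/range maps s, r.\<close>

definition path_rel :: "('e \<Rightarrow> 'v) \<Rightarrow> ('e \<Rightarrow> 'v) \<Rightarrow> ('v \<times> 'v) set" where
  "path_rel s r = {(s e, r e) | e. True}\<^sup>*"

definition geq_path :: "('e \<Rightarrow> 'v) \<Rightarrow> ('e \<Rightarrow> 'v) \<Rightarrow> 'v \<Rightarrow> 'v \<Rightarrow> bool" where
  "geq_path s r u v \<longleftrightarrow> (u, v) \<in> path_rel s r"

definition Mset :: "('e \<Rightarrow> 'v) \<Rightarrow> ('e \<Rightarrow> 'v) \<Rightarrow> 'v \<Rightarrow> 'v set" where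
  "Mset s r v = {u. geq_path s r u v}"

definition regular :: "('e \<Rightarrow> 'v) \<Rightarrow> 'v \<Rightarrow> bool" where
  "regular s v \<longleftrightarrow> finite {e. s e = v} \<and> {e. s e = v} \<noteq> {}"

definition infinite_emitter :: "('e \<Rightarrow> 'v) \<Rightarrow> 'v \<Rightarrow> bool" where
  "infinite_emitter s v \<longleftrightarrow> infinite {e. s e = v}"

definition hereditary :: "('e \<Rightarrow> 'v) \<Rightarrow> ('e \<Rightarrow> 'v) \<Rightarrow> 'v set \<Rightarrow> bool" where
  "hereditary s r H \<longleftrightarrow> (\<forall>u\<in>H. \<forall>v. geq_path s r u v \<longrightarrow> v \<in> H)"

definition saturated :: "('e \<Rightarrow> 'v) \<Rightarrow> ('e \<Rightarrow> 'v) \<Rightarrow> 'v set \<Rightarrow> bool" where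
  "saturated s r H \<longleftrightarrow> (\<forall>v. regular s v \<and> r ` {e. s e = v} \<subseteq> H \<longrightarrow> v \<in> H)"

definition breaking_vertices :: "('e \<Rightarrow> 'v) \<Rightarrow> ('e \<Rightarrow> 'v) \<Rightarrow> 'v set \<Rightarrow> 'v set" where
  "breaking_vertices s r H = {w. infinite_emitter s w \<and> w \<notin> H \<and>
      finite {e. s e = w \<and> r e \<notin> H} \<and> 1 \<le> card {e. s e = w \<and> r e \<notin> H}}"

datatype ('v, 'e) gen = GV 'v | GE 'e | GS 'e  \<comment> \<open>vertex, edge, ghost edge e^*\<close>

text \<open>Elements: finitely supported K-valued functions on words in the generators.\<close>

type_synonym ('v, 'e, 'k) fa = "('v, 'e) gen list \<Rightarrow> 'k"

definition fa_carrier :: "('v, 'e, 'k::field) fa set" where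
  "fa_carrier = {f. finite {w. f w \<noteq> 0}}"

definition fa_mult :: "('v, 'e, 'k::field) fa \<Rightarrow> ('v, 'e, 'k) fa \<Rightarrow> ('v, 'e, 'k) fa" where
  "fa_mult f g = (\<lambda>w. \<Sum>i\<le>length w. f (take i w) * g (drop i w))"

definition fa_add :: "('v, 'e, 'k::field) fa \<Rightarrow> ('v, 'e, 'k) fa \<Rightarrow> ('v, 'e, 'k) fa" where
  "fa_add f g = (\<lambda>w. f w + g w)"

definition fa_diff :: "('v, 'e, 'k::field) fa \<Rightarrow> ('v, 'e, 'k) fa \<Rightarrow> ('v, 'e, 'k) fa" where
  "fa_diff f g = (\<lambda>w. f w - g w)"

definition fa_zero :: "('v, 'e, 'k::field) fa" where
  "fa_zero = (\<lambda>w. 0)"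

definition fa_one :: "('v, 'e, 'k::field) fa" where
  "fa_one = (\<lambda>w. if w = [] then 1 else 0)"

definition fa_gen :: "('v, 'e) gen \<Rightarrow> ('v, 'e, 'k::field) fa" where
  "fa_gen x = (\<lambda>w. if w = [x] then 1 else 0)"

definition fa_sum :: "'i set \<Rightarrow> ('i \<Rightarrow> ('v, 'e, 'k::field) fa) \<Rightarrow> ('v, 'e, 'k) fa" where
  "fa_sum A g = (\<lambda>w. \<Sum>i\<in>A. g i w)"

definition FA :: "('v, 'e, 'k::field) fa ring" where
  "FA = \<lparr>carrier = fa_carrier, monoid.mult = fa_mult, one = fa_one, ring.zero = fa_zero, ring.add = fa_add\<rparr>"

definition ee_star :: "'e \<Rightarrow> ('v, 'e, 'k::field) fa" where
  "ee_star e = fa_mult (fa_gen (GE e)) (fa_gen (GS e))"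

definition lpa_relations :: "('e \<Rightarrow> 'v) \<Rightarrow> ('e \<Rightarrow> 'v) \<Rightarrow> ('v, 'e, 'k::field) fa set" where
  "lpa_relations s r =
     {fa_diff (fa_mult (fa_gen (GV v)) (fa_gen (GV v'))) (if v = v' then fa_gen (GV v) else fa_zero) | v v'. True}
   \<union> {fa_diff (fa_mult (fa_gen (GV (s e))) (fa_gen (GE e))) (fa_gen (GE e)) | e. True}
   \<union> {fa_diff (fa_mult (fa_gen (GE e)) (fa_gen (GV (r e)))) (fa_gen (GE e)) | e. True}
   \<union> {fa_diff (fa_mult (fa_gen (GV (r e))) (fa_gen (GS e))) (fa_gen (GS e)) | e. True}
   \<union> {fa_diff (fa_mult (fa_gen (GS e)) (fa_gen (GV (s e)))) (fa_gen (GS e)) | e. True}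
   \<union> {fa_diff (fa_mult (fa_gen (GS e)) (fa_gen (GE f))) (if e = f then fa_gen (GV (r e)) else fa_zero) | e f. True}
   \<union> {fa_diff (fa_gen (GV v)) (fa_sum {e. s e = v} ee_star) | v. regular s v}"

definition lpa_ideal :: "('e \<Rightarrow> 'v) \<Rightarrow> ('e \<Rightarrow> 'v) \<Rightarrow> ('v, 'e, 'k::field) fa set" where
  "lpa_ideal s r = genideal FA (lpa_relations s r)"

text \<open>The Leavitt path algebra L_K(E) as a ring (the K-algebra structure is
given by the central copy of K, i.e. the classes of the constant words c * 1).\<close>

definition LPA :: "('e \<Rightarrow> 'v) \<Rightarrow> ('e \<Rightarrow> 'v) \<Rightarrow> ('v, 'e, 'k::field) fa set ring" where
  "LPA s r = FA Quot (lpa_ideal s r)"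

definition lcls :: "('e \<Rightarrow> 'v) \<Rightarrow> ('e \<Rightarrow> 'v) \<Rightarrow> ('v, 'e, 'k::field) fa \<Rightarrow> ('v, 'e, 'k) fa set" where
  "lcls s r x = a_r_coset FA (lpa_ideal s r) x"

definition lvert :: "('e \<Rightarrow> 'v) \<Rightarrow> ('e \<Rightarrow> 'v) \<Rightarrow> 'v \<Rightarrow> ('v, 'e, 'k::field) fa set" where
  "lvert s r v = lcls s r (fa_gen (GV v))"

definition ledge :: "('e \<Rightarrow> 'v) \<Rightarrow> ('e \<Rightarrow> 'v) \<Rightarrow> 'e \<Rightarrow> ('v, 'e, 'k::field) fa set" where
  "ledge s r e = lcls s r (fa_gen (GE e))"

definition lghost :: "('e \<Rightarrow> 'v) \<Rightarrow> ('e \<Rightarrow> 'v) \<Rightarrow> 'e \<Rightarrow> ('v, 'e, 'k::field) fa set" where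
  "lghost s r e = lcls s r (fa_gen (GS e))"

definition vH :: "('e \<Rightarrow> 'v) \<Rightarrow> ('e \<Rightarrow> 'v) \<Rightarrow> 'v set \<Rightarrow> 'v \<Rightarrow> ('v, 'e, 'k::field) fa set" where
  "vH s r H w = lcls s r (fa_diff (fa_gen (GV w)) (fa_sum {e. s e = w \<and> r e \<notin> H} ee_star))"

definition IHS :: "('e \<Rightarrow> 'v) \<Rightarrow> ('e \<Rightarrow> 'v) \<Rightarrow> 'v set \<Rightarrow> 'v set \<Rightarrow> ('v, 'e, 'k::field) fa set set" where
  "IHS s r H S = genideal (LPA s r) (lvert s r ` H \<union> vH s r H ` S)"

text \<open>A word over X^{\<pm>1}: list of (exponent sign, letter); True = x, False = x^{-1}.\<close>

definition reduced_word :: "(bool \<times> 'a) list \<Rightarrow> bool" where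
  "reduced_word ws \<longleftrightarrow> (\<forall>i. Suc i < length ws \<longrightarrow>
      \<not> (snd (ws ! i) = snd (ws ! Suc i) \<and> fst (ws ! i) \<noteq> fst (ws ! Suc i)))"

definition word_eval :: "('a, 'b) monoid_scheme \<Rightarrow> (bool \<times> 'a) list \<Rightarrow> 'a" where
  "word_eval G ws = foldr (\<lambda>(b, x) acc. monoid.mult G (if b then x else m_inv G x) acc) ws (one G)"

definition free_basis :: "('a, 'b) monoid_scheme \<Rightarrow> 'a set \<Rightarrow> bool" where
  "free_basis G B \<longleftrightarrow> B \<subseteq> carrier G \<and> generate G B = carrier G \<and>
     (\<forall>ws. ws \<noteq> [] \<and> set (map snd ws) \<subseteq> B \<and> reduced_word ws \<longrightarrow> word_eval G ws \<noteq> one G)"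

definition is_free_group :: "('a, 'b) monoid_scheme \<Rightarrow> bool" where
  "is_free_group G \<longleftrightarrow> group G \<and> (\<exists>B. free_basis G B)"

definition is_cyclic :: "('a, 'b) monoid_scheme \<Rightarrow> bool" where
  "is_cyclic G \<longleftrightarrow> (\<exists>g\<in>carrier G. generate G {g} = carrier G)"

end

theory Submission
  imports Defs
begin

text \<open>Since \<open>w\<close> is not a regular vertex, no Cuntz--Krieger relation is imposed at \<open>w\<close>, so
  \<open>L\<^sub>K(E)\<close> acts on the \<open>K\<close>-valued functions on the paths ending at \<open>w\<close>. Because
  \<open>M(w) = E\<^sup>0 \<setminus> H\<close> contains the range of an edge from \<open>w\<close> to \<open>E\<^sup>0 \<setminus> H\<close>, some path leads
  back to \<open>w\<close>; let \<open>f\<close> be its last edge. From \<open>f\<^sup>* w\<^sup>H = 0 = w\<^sup>H f\<close> the elements \<open>2 w\<^sup>H f\<^sup>*\<close> and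
  \<open>2 f w\<^sup>H\<close> square to zero, so \<open>a = 1 + 2 w\<^sup>H f\<^sup>*\<close> and \<open>b = 1 + 2 f w\<^sup>H\<close> are units. On the
  functions supported on the trivial path and on \<open>f\<close> they act by Sanov's matrices
  \<open>[[1,2],[0,1]]\<close> and \<open>[[1,0],[2,1]]\<close>, and since \<open>K\<close> has characteristic \<open>0\<close> this plane contains
  a faithful copy of \<open>\<int>\<^sup>2\<close>. The ping-pong argument on \<open>\<int>\<^sup>2\<close> then shows that no nonempty reduced
  word in \<open>a, b\<close> is trivial and that \<open>a\<close> and \<open>b\<close> do not commute.\<close>

lemma (in ring) one_add_unit_of_square_zero:
  assumes u: "u \<in> carrier R" and uu: "u \<otimes> u = \<zero>"
  shows "\<one> \<oplus> u \<in> Units R"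
proof -
  have "(\<one> \<oplus> u) \<otimes> (\<one> \<oplus> \<ominus> u) = \<one> \<oplus> (u \<oplus> \<ominus> u) \<oplus> \<ominus> (u \<otimes> u)"
    using u by (simp add: l_distr r_distr r_minus a_assoc minus_add)
  moreover have "(\<one> \<oplus> \<ominus> u) \<otimes> (\<one> \<oplus> u) = \<one> \<oplus> (\<ominus> u \<oplus> u) \<oplus> \<ominus> (u \<otimes> u)"
    using u by (simp add: l_distr r_distr l_minus a_assoc)
  ultimately show ?thesis
    using u uu unfolding Units_def by (auto simp: r_neg l_neg intro!: bexI[of _ "\<one> \<oplus> \<ominus> u"])
qed

lemma (in ring) one_add_two_mult_unit_of_square_zero:
  assumes x: "x \<in> carrier R" "y \<in> carrier R" and yx: "y \<otimes> x = \<zero>"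
  shows "\<one> \<oplus> (\<one> \<oplus> \<one>) \<otimes> x \<otimes> y \<in> Units R"
proof -
  have "(\<one> \<oplus> \<one>) \<otimes> x \<otimes> y = x \<otimes> y \<oplus> x \<otimes> y"
    using x by (simp add: l_distr)
  moreover have "(x \<otimes> y \<oplus> x \<otimes> y) \<otimes> (x \<otimes> y \<oplus> x \<otimes> y) = \<zero>"
    using x yx by (simp add: l_distr r_distr m_assoc[of x y] m_assoc[symmetric, of y x])
  ultimately show ?thesis using x by (simp add: one_add_unit_of_square_zero)
qed

lemma (in ring) finsum_if_eq:
  assumes "finite A" "g \<in> A \<rightarrow> carrier R"
  shows "(\<Oplus>e\<in>A. if i = e then g e else \<zero>) = (if i \<in> A then g i else \<zero>)"
proof (cases "i \<in> A")
  case False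
  then have "(\<Oplus>e\<in>A. if i = e then g e else \<zero>) = (\<Oplus>e\<in>A. \<zero>)"
    by (intro finsum_cong') auto
  with False show ?thesis by simp
qed (use assms in \<open>simp add: finsum_singleton\<close>)

lemma (in ring) r_diff_distr:
  "x \<in> carrier R \<Longrightarrow> y \<in> carrier R \<Longrightarrow> z \<in> carrier R \<Longrightarrow> z \<otimes> (x \<ominus> y) = z \<otimes> x \<ominus> z \<otimes> y"
  by (simp add: a_minus_def r_distr r_minus)

lemma (in ring) l_diff_distr:
  "x \<in> carrier R \<Longrightarrow> y \<in> carrier R \<Longrightarrow> z \<in> carrier R \<Longrightarrow> (x \<ominus> y) \<otimes> z = x \<otimes> z \<ominus> y \<otimes> z"
  by (simp add: a_minus_def l_distr l_minus)

lemma (in group) not_cyclic_of_noncommuting: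
  assumes "a \<in> carrier G" "b \<in> carrier G" "a \<otimes> b \<noteq> b \<otimes> a"
  shows "\<not> is_cyclic G"
proof
  assume "is_cyclic G"
  then obtain g where g: "g \<in> carrier G" "generate G {g} = carrier G"
    by (auto simp: is_cyclic_def)
  then have "a \<in> generate G {g}" "b \<in> generate G {g}" using assms(1,2) by auto
  then obtain i j :: int where "a = g [^] i" "b = g [^] j"
    using generate_pow[OF g(1)] by auto
  then have "a \<otimes> b = b \<otimes> a"
    using int_pow_mult[OF g(1), symmetric] by (simp add: add.commute)
  with assms(3) show False ..
qed

section \<open>Sanov's ping-pong on \<open>\<int>\<^sup>2\<close>\<close>

text \<open>The letter \<open>(sg, True)\<close> acts on \<open>\<int>\<^sup>2\<close> by the matrix \<open>A\<^sup>\<plusminus>\<^sup>1\<close> with \<open>A = [[1,2],[0,1]]\<close>, and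
  \<open>(sg, False)\<close> by \<open>B\<^sup>\<plusminus>\<^sup>1\<close> with \<open>B = [[1,0],[2,1]]\<close>; the sign is \<open>+\<close> iff \<open>sg\<close>.\<close>

fun sanov_move :: "bool \<times> bool \<Rightarrow> int \<times> int \<Rightarrow> int \<times> int" where
  "sanov_move (sg, True) (x, y) = (if sg then (x + 2 * y, y) else (x - 2 * y, y))"
| "sanov_move (sg, False) (x, y) = (if sg then (x, y + 2 * x) else (x, y - 2 * x))"

lemma sanov_move_inverse: "sanov_move (True, b) (sanov_move (False, b) p) = p"
  by (cases p; cases b) auto

fun pingpong_zone :: "bool \<times> bool \<Rightarrow> int \<times> int \<Rightarrow> bool" where
  "pingpong_zone (sg, True) (c, d) = (\<bar>c\<bar> > \<bar>d\<bar> \<and> (if sg then c * d > 0 else c * d < 0))"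
| "pingpong_zone (sg, False) (c, d) = (\<bar>d\<bar> > \<bar>c\<bar> \<and> (if sg then c * d > 0 else c * d < 0))"

definition pingpong_seed :: "bool \<Rightarrow> int \<times> int" where
  "pingpong_seed b = (if b then (0, 1) else (1, 0))"

lemma not_pingpong_zone_seed: "\<not> pingpong_zone l (pingpong_seed b)"
  by (cases l; cases "snd l"; cases b) (auto simp: pingpong_seed_def)

lemma pingpong_zone_move_seed: "pingpong_zone l (sanov_move l (pingpong_seed (snd l)))"
  by (cases l; cases "snd l"; cases "fst l") (auto simp: pingpong_seed_def)

lemma pingpong_zone_move:
  assumes "pingpong_zone l' p" and "\<not> (snd l' = snd l \<and> fst l' \<noteq> fst l)"
  shows "pingpong_zone l (sanov_move l p)"
  using assms
  by (cases l; cases l'; cases p; cases "snd l"; cases "snd l'"; cases "fst l"; cases "fst l'")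
     (auto simp: zero_less_mult_iff mult_less_0_iff abs_if split: if_splits)

lemma pingpong_word:
  "ls \<noteq> [] \<Longrightarrow> reduced_word ls \<Longrightarrow>
     pingpong_zone (hd ls) (foldr sanov_move ls (pingpong_seed (snd (last ls))))"
proof (induction ls)
  case (Cons l ls)
  show ?case
  proof (cases "ls = []")
    case True
    then show ?thesis by (simp add: pingpong_zone_move_seed)
  next
    case False
    have "reduced_word ls"
      using Cons.prems(2) unfolding reduced_word_def by (metis Suc_less_eq length_Cons nth_Cons_Suc)
    with Cons.IH False
    have "pingpong_zone (hd ls) (foldr sanov_move ls (pingpong_seed (snd (last ls))))" by simp
    moreover have "\<not> (snd (hd ls) = snd l \<and> fst (hd ls) \<noteq> fst l)"
      using Cons.prems(2) False unfolding reduced_word_def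
      by (cases ls) (auto dest: spec[of _ 0])
    ultimately show ?thesis using False by (simp add: pingpong_zone_move)
  qed
qed simp

lemma foldr_sanov_move_nontrivial:
  assumes "ls \<noteq> []" "reduced_word ls"
  obtains p where "foldr sanov_move ls p \<noteq> p"
  using pingpong_word[OF assms] not_pingpong_zone_seed by metis

lemma (in group) sanov_action_free_noncommuting:
  fixes R :: "'a \<Rightarrow> 'x \<Rightarrow> 'x" and \<iota> :: "int \<times> int \<Rightarrow> 'x"
  assumes ab: "a \<in> carrier G" "b \<in> carrier G"
    and R_mult: "\<And>x y. x \<in> carrier G \<Longrightarrow> y \<in> carrier G \<Longrightarrow> R (x \<otimes> y) = R x \<circ> R y"
    and R_one: "R \<one> = id" and inj: "inj \<iota>"
    and R_a: "\<And>p. R a (\<iota> p) = \<iota> (sanov_move (True, True) p)"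
    and R_b: "\<And>p. R b (\<iota> p) = \<iota> (sanov_move (True, False) p)"
  shows "\<forall>ws. ws \<noteq> [] \<and> set (map snd ws) \<subseteq> {a, b} \<and> reduced_word ws \<longrightarrow> word_eval G ws \<noteq> \<one>"
    and "a \<otimes> b \<noteq> b \<otimes> a"
proof -
  have "\<iota> (sanov_move (True, True) (0, 1)) \<noteq> \<iota> (sanov_move (True, False) (0, 1))"
    using inj by (auto dest: injD)
  then have a_ne_b: "a \<noteq> b" using R_a R_b by metis
  define letter :: "bool \<times> 'a \<Rightarrow> bool \<times> bool" where "letter = (\<lambda>(sg, y). (sg, y = a))"
  have R_gen: "R y (\<iota> q) = \<iota> (sanov_move (True, y = a) q)" if y: "y \<in> {a, b}" for y q
  proof -
    from y consider "y = a" | "y = b" "y \<noteq> a" using a_ne_b by blast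
    then show ?thesis by cases (simp_all only: R_a R_b simp_thms)
  qed
  have R_letter: "R (if sg then y else inv y) (\<iota> p) = \<iota> (sanov_move (sg, y = a) p)"
    if y: "y \<in> {a, b}" for sg y p
  proof (cases sg)
    case False
    let ?q = "sanov_move (False, y = a) p"
    have yc: "y \<in> carrier G" using y ab by auto
    have "R (inv y) \<circ> R y = id"
      using R_mult[of "inv y" y] R_one yc by (metis inv_closed l_inv)
    then have "R (inv y) (R y (\<iota> ?q)) = \<iota> ?q" by (metis comp_apply id_apply)
    moreover have "R y (\<iota> ?q) = \<iota> p"
      using R_gen[OF y, of ?q] sanov_move_inverse by simp
    ultimately have "R (inv y) (\<iota> p) = \<iota> ?q" by simp
    with False show ?thesis by simp
  qed (use R_gen[OF y] in simp)
  have R_word: "word_eval G ws \<in> carrier G \<and>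
      R (word_eval G ws) (\<iota> p) = \<iota> (foldr sanov_move (map letter ws) p)"
    if "set (map snd ws) \<subseteq> {a, b}" for ws p
    using that
  proof (induction ws arbitrary: p)
    case Nil
    then show ?case using R_one by (simp add: word_eval_def)
  next
    case (Cons l ws)
    obtain sg y where l: "l = (sg, y)" by (cases l)
    have y: "y \<in> {a, b}" using Cons.prems l by auto
    then have "(if sg then y else inv y) \<in> carrier G" using ab by auto
    with Cons y show ?case
      using R_mult R_letter[OF y] by (simp add: word_eval_def l letter_def)
  qed
  show "\<forall>ws. ws \<noteq> [] \<and> set (map snd ws) \<subseteq> {a, b} \<and> reduced_word ws \<longrightarrow> word_eval G ws \<noteq> \<one>"
  proof (intro allI impI)
    fix ws assume ws: "ws \<noteq> [] \<and> set (map snd ws) \<subseteq> {a, b} \<and> reduced_word ws"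
    have "reduced_word (map letter ws)"
      unfolding reduced_word_def
    proof (intro allI impI)
      fix i assume i: "Suc i < length (map letter ws)"
      then have "snd (ws ! i) \<in> {a, b}" "snd (ws ! Suc i) \<in> {a, b}"
        using ws by (metis (no_types) Suc_lessD length_map nth_map nth_mem subsetD)+
      then have "(snd (ws ! i) = a \<longleftrightarrow> snd (ws ! Suc i) = a) \<longleftrightarrow> snd (ws ! i) = snd (ws ! Suc i)"
        using a_ne_b by auto
      then show "\<not> (snd (map letter ws ! i) = snd (map letter ws ! Suc i) \<and>
                    fst (map letter ws ! i) \<noteq> fst (map letter ws ! Suc i))"
        using ws i unfolding reduced_word_def letter_def by (auto simp: case_prod_beta)
    qed
    then obtain p where "foldr sanov_move (map letter ws) p \<noteq> p"
      using ws foldr_sanov_move_nontrivial by blast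
    then have "R (word_eval G ws) (\<iota> p) \<noteq> R \<one> (\<iota> p)"
      using R_word ws R_one inj by (auto dest: injD)
    then show "word_eval G ws \<noteq> \<one>" by auto
  qed
  have "R (a \<otimes> b) (\<iota> (0, 1)) \<noteq> R (b \<otimes> a) (\<iota> (0, 1))"
    using R_mult ab R_a R_b inj by (auto dest: injD)
  then show "a \<otimes> b \<noteq> b \<otimes> a" by auto
qed

section \<open>The free algebra as a ring\<close>

lemma fa_mult_eq_sum_splits:
  assumes "finite A" "finite B" "{u. f u \<noteq> 0} \<subseteq> A" "{u. g u \<noteq> 0} \<subseteq> B"
  shows "fa_mult f g x = (\<Sum>p\<in>{p\<in>A \<times> B. fst p @ snd p = x}. f (fst p) * (g (snd p) :: 'k::field))"
proof -
  let ?split = "\<lambda>i. (take i x, drop i x)"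
  have inj: "inj_on ?split {..length x}"
    by (rule inj_onI) (metis atMost_iff length_take min.absorb2 prod.inject)
  have splits: "?split ` {..length x} = {p. fst p @ snd p = x}"
  proof
    show "{p. fst p @ snd p = x} \<subseteq> ?split ` {..length x}"
    proof
      fix p assume p: "p \<in> {p. fst p @ snd p = x}"
      then have "p = ?split (length (fst p))" by (cases p) auto
      moreover have "length (fst p) \<in> {..length x}" using p by auto
      ultimately show "p \<in> ?split ` {..length x}" by blast
    qed
  qed auto
  have "fa_mult f g x = (\<Sum>p\<in>{p. fst p @ snd p = x}. f (fst p) * g (snd p))"
    unfolding fa_mult_def splits[symmetric] by (subst sum.reindex[OF inj]) simp
  also have "\<dots> = (\<Sum>p\<in>{p\<in>A \<times> B. fst p @ snd p = x}. f (fst p) * g (snd p))"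
  proof (rule sum.mono_neutral_right)
    show "finite {p. fst p @ snd p = x}"
      by (metis splits finite_atMost finite_imageI)
  qed (use assms(3,4) in auto)
  finally show ?thesis .
qed

lemma fa_mult_carrier:
  assumes "f \<in> fa_carrier" "g \<in> fa_carrier"
  shows "fa_mult f g \<in> fa_carrier"
proof -
  let ?A = "{u. f u \<noteq> 0}" and ?B = "{u. g u \<noteq> 0}"
  have fin: "finite ?A" "finite ?B" using assms by (auto simp: fa_carrier_def)
  have "{x. fa_mult f g x \<noteq> 0} \<subseteq> (\<lambda>p. fst p @ snd p) ` (?A \<times> ?B)"
  proof
    fix x assume "x \<in> {x. fa_mult f g x \<noteq> 0}"
    then have "(\<Sum>p\<in>{p\<in>?A \<times> ?B. fst p @ snd p = x}. f (fst p) * g (snd p)) \<noteq> 0"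
      by (simp add: fa_mult_eq_sum_splits[OF fin order_refl order_refl])
    then obtain p where "p \<in> {p\<in>?A \<times> ?B. fst p @ snd p = x}"
      by (meson sum.not_neutral_contains_not_neutral)
    then show "x \<in> (\<lambda>p. fst p @ snd p) ` (?A \<times> ?B)" by auto
  qed
  then show ?thesis
    unfolding fa_carrier_def using fin by (auto intro: finite_subset)
qed

lemma sum_atMost_triangle:
  fixes F :: "nat \<Rightarrow> nat \<Rightarrow> 'a::comm_monoid_add"
  shows "(\<Sum>i\<le>n. \<Sum>j\<le>i. F j i) = (\<Sum>j\<le>n. \<Sum>k\<le>n-j. F j (j+k))"
proof (induction n)
  case (Suc n)
  have "(\<Sum>j\<le>n. \<Sum>k\<le>Suc n-j. F j (j+k)) = (\<Sum>j\<le>n. (\<Sum>k\<le>n-j. F j (j+k)) + F j (Suc n))"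
    by (intro sum.cong refl) (simp add: Suc_diff_le)
  then show ?case using Suc by (simp add: sum.distrib add.assoc)
qed simp

lemma fa_mult_assoc:
  "fa_mult (fa_mult f g) h = fa_mult f (fa_mult g (h :: ('v,'e,'k::field) fa))"
proof
  fix x :: "('v,'e) gen list"
  let ?n = "length x"
  have "fa_mult (fa_mult f g) h x =
      (\<Sum>i\<le>?n. \<Sum>j\<le>i. f (take j x) * g (take (i-j) (drop j x)) * h (drop i x))"
    unfolding fa_mult_def sum_distrib_right
    by (intro sum.cong refl) (auto simp: min_def drop_take)
  also have "\<dots> = (\<Sum>j\<le>?n. \<Sum>k\<le>?n-j. f (take j x) * g (take (j+k-j) (drop j x)) * h (drop (j+k) x))"
    by (rule sum_atMost_triangle)
  also have "\<dots> = fa_mult f (fa_mult g h) x"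
    unfolding fa_mult_def by (simp add: sum_distrib_left mult.assoc add.commute)
  finally show "fa_mult (fa_mult f g) h x = fa_mult f (fa_mult g h) x" .
qed

lemma fa_one_mult: "fa_mult fa_one f = (f :: ('v,'e,'k::field) fa)"
  unfolding fa_mult_def fa_one_def by (rule ext, subst sum.atMost_shift) (auto simp: sum.neutral)

lemma fa_mult_one: "fa_mult f fa_one = (f :: ('v,'e,'k::field) fa)"
proof
  fix x :: "('v,'e) gen list"
  have "fa_mult f fa_one x = (\<Sum>i\<in>{length x}. f (take i x) * (if drop i x = [] then 1 else 0))"
    unfolding fa_mult_def fa_one_def by (rule sum.mono_neutral_right) auto
  then show "fa_mult f fa_one x = f x" by simp
qed

lemma fa_one_carrier: "(fa_one :: ('v,'e,'k::field) fa) \<in> fa_carrier"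
  by (simp add: fa_carrier_def fa_one_def)

lemma fa_zero_carrier: "fa_zero \<in> fa_carrier"
  by (simp add: fa_zero_def fa_carrier_def)

lemma fa_gen_carrier: "(fa_gen g :: ('v,'e,'k::field) fa) \<in> fa_carrier"
  by (simp add: fa_carrier_def fa_gen_def)

lemma fa_add_carrier: "f \<in> fa_carrier \<Longrightarrow> g \<in> fa_carrier \<Longrightarrow> fa_add f g \<in> fa_carrier"
  unfolding fa_carrier_def fa_add_def
  by (auto intro: finite_subset[of _ "{w. f w \<noteq> 0} \<union> {w. g w \<noteq> 0}"])

lemma fa_diff_carrier: "f \<in> fa_carrier \<Longrightarrow> g \<in> fa_carrier \<Longrightarrow> fa_diff f g \<in> fa_carrier"
  unfolding fa_carrier_def fa_diff_def
  by (auto intro: finite_subset[of _ "{w. f w \<noteq> 0} \<union> {w. g w \<noteq> 0}"])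

lemma fa_sum_carrier:
  assumes "finite A" "\<And>i. i \<in> A \<Longrightarrow> g i \<in> fa_carrier"
  shows "fa_sum A g \<in> fa_carrier"
proof -
  have "{w. fa_sum A g w \<noteq> 0} \<subseteq> (\<Union>i\<in>A. {w. g i w \<noteq> 0})"
    by (auto simp: fa_sum_def dest: sum.not_neutral_contains_not_neutral)
  then show ?thesis
    using assms by (auto simp: fa_carrier_def intro: finite_subset)
qed

lemma ee_star_carrier: "ee_star e \<in> fa_carrier"
  unfolding ee_star_def by (intro fa_mult_carrier fa_gen_carrier)

lemma lpa_relations_carrier: "lpa_relations s r \<subseteq> (fa_carrier :: ('v,'e,'k::field) fa set)"
  unfolding lpa_relations_def regular_def
  by (auto intro!: fa_diff_carrier fa_mult_carrier fa_gen_carrier fa_zero_carrier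
      fa_sum_carrier ee_star_carrier)

lemma FA_simps [simp]:
  "carrier FA = fa_carrier" "monoid.mult FA = fa_mult" "ring.add FA = fa_add"
  "monoid.one FA = fa_one" "ring.zero FA = fa_zero"
  by (simp_all add: FA_def)

lemma ring_FA: "ring (FA :: ('v,'e,'k::field) fa ring)"
proof (rule ringI)
  show "abelian_group (FA :: ('v,'e,'k) fa ring)"
  proof (rule abelian_groupI)
    fix x :: "('v,'e,'k) fa" assume "x \<in> carrier FA"
    then show "\<exists>y\<in>carrier FA. y \<oplus>\<^bsub>FA\<^esub> x = \<zero>\<^bsub>FA\<^esub>"
      by (intro bexI[of _ "\<lambda>w. - x w"]) (auto simp: fa_add_def fa_zero_def fa_carrier_def)
  qed (auto simp: fa_add_carrier fa_zero_carrier, auto simp: fa_add_def fa_zero_def ac_simps)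
  show "monoid (FA :: ('v,'e,'k) fa ring)"
    by (rule monoidI) (auto simp: fa_mult_carrier fa_mult_assoc fa_one_mult fa_mult_one fa_one_carrier)
qed (auto simp: fa_add_def fa_mult_def distrib_left distrib_right sum.distrib)

lemma FA_a_minus:
  assumes "f \<in> fa_carrier" "g \<in> fa_carrier"
  shows "f \<ominus>\<^bsub>FA\<^esub> g = (fa_diff f g :: ('v,'e,'k::field) fa)"
proof -
  interpret R: ring "FA :: ('v,'e,'k) fa ring" by (rule ring_FA)
  have "\<ominus>\<^bsub>FA\<^esub> g = (\<lambda>w. - g w)"
    by (rule R.minus_equality) (use assms(2) in \<open>auto simp: fa_add_def fa_zero_def fa_carrier_def\<close>)
  then show ?thesis by (simp add: a_minus_def fa_add_def fa_diff_def)
qed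

section \<open>The path representation\<close>

context
  fixes s r :: "'e \<Rightarrow> 'v" and w :: 'v
begin

text \<open>The free algebra acts on \<open>K\<close>-valued functions on the paths ending at \<open>w\<close>, a path being
  a list of edges whose last edge ends at \<open>w\<close> (the empty list is the trivial path at \<open>w\<close>):
  a vertex \<open>v\<close> restricts to paths starting at \<open>v\<close>, an edge \<open>e\<close> strips a leading \<open>e\<close>, and a
  ghost edge \<open>e\<^sup>*\<close> prepends \<open>e\<close>. This is the transpose of the left action of \<open>L\<^sub>K(E)\<close> on the
  span of these paths.\<close>

definition path_source :: "'e list \<Rightarrow> 'v" where
  "path_source \<mu> = (case \<mu> of [] \<Rightarrow> w | e # _ \<Rightarrow> s e)"

lemma path_source_Nil [simp]: "path_source [] = w"
  and path_source_Cons [simp]: "path_source (e # \<mu>) = s e"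
  by (simp_all add: path_source_def)

fun is_path :: "'e list \<Rightarrow> bool" where
  "is_path [] = True"
| "is_path (e # \<mu>) = (r e = path_source \<mu> \<and> is_path \<mu>)"

fun gen_shift :: "('v,'e) gen \<Rightarrow> 'e list \<Rightarrow> 'e list option" where
  "gen_shift (GV v) \<nu> = (if is_path \<nu> \<and> path_source \<nu> = v then Some \<nu> else None)"
| "gen_shift (GE e) \<nu> =
     (case \<nu> of [] \<Rightarrow> None | e' # \<mu> \<Rightarrow> if e' = e \<and> is_path \<nu> then Some \<mu> else None)"
| "gen_shift (GS e) \<nu> = (if is_path \<nu> \<and> r e = path_source \<nu> then Some (e # \<nu>) else None)"

fun word_shift :: "('v,'e) gen list \<Rightarrow> 'e list \<Rightarrow> 'e list option" where
  "word_shift [] \<nu> = Some \<nu>"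
| "word_shift (g # u) \<nu> = Option.bind (gen_shift g \<nu>) (word_shift u)"

definition word_act :: "('v,'e) gen list \<Rightarrow> ('e list \<Rightarrow> 'k::field) \<Rightarrow> 'e list \<Rightarrow> 'k" where
  "word_act u \<phi> \<nu> = (case word_shift u \<nu> of None \<Rightarrow> 0 | Some \<nu>' \<Rightarrow> \<phi> \<nu>')"

definition path_rep :: "('v,'e,'k::field) fa \<Rightarrow> ('e list \<Rightarrow> 'k) \<Rightarrow> 'e list \<Rightarrow> 'k" where
  "path_rep x \<phi> \<nu> = (\<Sum>u\<in>{u. x u \<noteq> 0}. x u * word_act u \<phi> \<nu>)"

lemma word_shift_append: "word_shift (u @ v) \<nu> = Option.bind (word_shift u \<nu>) (word_shift v)"
  by (induction u arbitrary: \<nu>) (auto split: Option.bind_splits)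

lemma word_act_append: "word_act (u @ v) \<phi> = word_act u (word_act v \<phi>)"
  by (auto simp: word_act_def word_shift_append fun_eq_iff split: option.splits Option.bind_splits)

lemma word_act_sum:
  "word_act u (\<lambda>\<nu>. \<Sum>i\<in>A. c i * \<psi> i \<nu>) \<nu> = (\<Sum>i\<in>A. c i * word_act u (\<psi> i) \<nu>)"
  by (auto simp: word_act_def split: option.splits)

lemma word_act_vertex:
  "word_act [GV v] \<phi> \<nu> = (if is_path \<nu> \<and> path_source \<nu> = v then \<phi> \<nu> else 0)"
  by (simp add: word_act_def)

lemma word_act_edge_ghost:
  "word_act [GE e, GS e] \<phi> \<nu> =
     (case \<nu> of [] \<Rightarrow> 0 | e' # _ \<Rightarrow> if e' = e \<and> is_path \<nu> then \<phi> \<nu> else 0)"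
  by (cases \<nu>) (auto simp: word_act_def)

lemma path_rep_eq_sum:
  assumes "finite A" "{u. x u \<noteq> 0} \<subseteq> A"
  shows "path_rep x \<phi> \<nu> = (\<Sum>u\<in>A. x u * word_act u \<phi> \<nu>)"
  unfolding path_rep_def using assms by (intro sum.mono_neutral_left) auto

lemma path_rep_add:
  assumes "x \<in> fa_carrier" "y \<in> fa_carrier"
  shows "path_rep (fa_add x y) \<phi> \<nu> = path_rep x \<phi> \<nu> + path_rep y \<phi> \<nu>"
proof -
  let ?A = "{u. x u \<noteq> 0} \<union> {u. y u \<noteq> 0}"
  have fin: "finite ?A" using assms by (auto simp: fa_carrier_def)
  have "path_rep (fa_add x y) \<phi> \<nu> = (\<Sum>u\<in>?A. fa_add x y u * word_act u \<phi> \<nu>)"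
    by (rule path_rep_eq_sum[OF fin]) (auto simp: fa_add_def)
  then show ?thesis
    using path_rep_eq_sum[OF fin, of x] path_rep_eq_sum[OF fin, of y]
    by (simp add: fa_add_def distrib_right sum.distrib)
qed

lemma path_rep_diff:
  assumes "x \<in> fa_carrier" "y \<in> fa_carrier"
  shows "path_rep (fa_diff x y) \<phi> \<nu> = path_rep x \<phi> \<nu> - path_rep y \<phi> \<nu>"
proof -
  let ?A = "{u. x u \<noteq> 0} \<union> {u. y u \<noteq> 0}"
  have fin: "finite ?A" using assms by (auto simp: fa_carrier_def)
  have "path_rep (fa_diff x y) \<phi> \<nu> = (\<Sum>u\<in>?A. fa_diff x y u * word_act u \<phi> \<nu>)"
    by (rule path_rep_eq_sum[OF fin]) (auto simp: fa_diff_def)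
  then show ?thesis
    using path_rep_eq_sum[OF fin, of x] path_rep_eq_sum[OF fin, of y]
    by (simp add: fa_diff_def left_diff_distrib sum_subtractf)
qed

lemma path_rep_zero: "path_rep fa_zero \<phi> \<nu> = 0"
  by (simp add: path_rep_def fa_zero_def)

lemma path_rep_of_zero_fun: "path_rep x (\<lambda>_. 0) \<nu> = 0"
  by (simp add: path_rep_def word_act_def option.case_eq_if)

lemma path_rep_one: "path_rep fa_one \<phi> \<nu> = \<phi> \<nu>"
proof -
  have "path_rep fa_one \<phi> \<nu> = (\<Sum>u\<in>{[]}. fa_one u * word_act u \<phi> \<nu>)"
    by (rule path_rep_eq_sum) (auto simp: fa_one_def)
  then show ?thesis by (simp add: fa_one_def word_act_def)
qed

lemma path_rep_gen: "path_rep (fa_gen g) \<phi> \<nu> = word_act [g] \<phi> \<nu>"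
proof -
  have "path_rep (fa_gen g) \<phi> \<nu> = (\<Sum>u\<in>{[g]}. fa_gen g u * word_act u \<phi> \<nu>)"
    by (rule path_rep_eq_sum) (auto simp: fa_gen_def)
  then show ?thesis by (simp add: fa_gen_def)
qed

lemma path_rep_mult:
  assumes "x \<in> fa_carrier" "y \<in> fa_carrier"
  shows "path_rep (fa_mult x y) \<phi> \<nu> = path_rep x (path_rep y \<phi>) \<nu>"
proof -
  let ?A = "{u. x u \<noteq> 0}" and ?B = "{u. y u \<noteq> 0}"
  let ?S = "(\<lambda>p. fst p @ snd p) ` (?A \<times> ?B)"
  have fin: "finite ?A" "finite ?B" using assms by (auto simp: fa_carrier_def)
  note splits = fa_mult_eq_sum_splits[OF fin order_refl order_refl]
  have supp: "{u. fa_mult x y u \<noteq> 0} \<subseteq> ?S"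
  proof
    fix z assume "z \<in> {u. fa_mult x y u \<noteq> 0}"
    then have "(\<Sum>p\<in>{p\<in>?A \<times> ?B. fst p @ snd p = z}. x (fst p) * y (snd p)) \<noteq> 0"
      by (simp add: splits)
    then obtain p where "p \<in> {p\<in>?A \<times> ?B. fst p @ snd p = z}"
      by (meson sum.not_neutral_contains_not_neutral)
    then show "z \<in> ?S" by auto
  qed
  have "path_rep (fa_mult x y) \<phi> \<nu> = (\<Sum>z\<in>?S. fa_mult x y z * word_act z \<phi> \<nu>)"
    using fin by (intro path_rep_eq_sum supp) auto
  also have "\<dots> = (\<Sum>z\<in>?S. \<Sum>p\<in>{p\<in>?A \<times> ?B. fst p @ snd p = z}.
                    x (fst p) * y (snd p) * word_act (fst p @ snd p) \<phi> \<nu>)"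
    by (simp add: splits sum_distrib_right)
  also have "\<dots> = (\<Sum>p\<in>?A \<times> ?B. x (fst p) * y (snd p) * word_act (fst p @ snd p) \<phi> \<nu>)"
    by (rule sum.group) (use fin in auto)
  also have "\<dots> = (\<Sum>u\<in>?A. \<Sum>v\<in>?B. x u * (y v * word_act u (word_act v \<phi>) \<nu>))"
    by (simp add: sum.cartesian_product word_act_append mult.assoc case_prod_beta)
  also have "\<dots> = path_rep x (path_rep y \<phi>) \<nu>"
    unfolding path_rep_def by (simp add: word_act_sum sum_distrib_left)
  finally show ?thesis .
qed

lemma path_rep_fa_sum:
  assumes "finite A" "\<And>i. i \<in> A \<Longrightarrow> g i \<in> fa_carrier"
  shows "path_rep (fa_sum A g) \<phi> \<nu> = (\<Sum>i\<in>A. path_rep (g i) \<phi> \<nu>)"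
proof -
  let ?U = "\<Union>i\<in>A. {u. g i u \<noteq> 0}"
  have fin: "finite ?U" using assms by (auto simp: fa_carrier_def)
  have "path_rep (fa_sum A g) \<phi> \<nu> = (\<Sum>u\<in>?U. fa_sum A g u * word_act u \<phi> \<nu>)"
    by (rule path_rep_eq_sum[OF fin])
      (auto simp: fa_sum_def dest: sum.not_neutral_contains_not_neutral)
  also have "\<dots> = (\<Sum>i\<in>A. \<Sum>u\<in>?U. g i u * word_act u \<phi> \<nu>)"
    by (simp add: fa_sum_def sum_distrib_right sum.swap[of _ A])
  also have "\<dots> = (\<Sum>i\<in>A. path_rep (g i) \<phi> \<nu>)"
    by (intro sum.cong refl path_rep_eq_sum[OF fin, symmetric]) auto
  finally show ?thesis .
qed

lemma path_rep_gen_mult_gen: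
  "path_rep (fa_mult (fa_gen a) (fa_gen b)) \<phi> \<nu> = word_act [a, b] \<phi> \<nu>"
proof -
  have "path_rep (fa_gen b) \<phi> = word_act [b] \<phi>" by (rule ext) (rule path_rep_gen)
  then have "path_rep (fa_mult (fa_gen a) (fa_gen b)) \<phi> \<nu> = word_act [a] (word_act [b] \<phi>) \<nu>"
    by (simp add: path_rep_mult fa_gen_carrier path_rep_gen)
  also have "\<dots> = word_act ([a] @ [b]) \<phi> \<nu>" by (simp only: word_act_append)
  finally show ?thesis by simp
qed

lemma path_rep_relation:
  assumes w_not_regular: "\<not> regular s w" and x: "x \<in> lpa_relations s r"
  shows "path_rep x \<phi> \<nu> = (0 :: 'k::field)"
proof -
  have gen2: "\<And>a b. fa_mult (fa_gen a) (fa_gen b) \<in> (fa_carrier :: ('v,'e,'k) fa set)"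
    by (intro fa_mult_carrier fa_gen_carrier)
  note rep_simps = path_rep_diff[OF gen2 fa_zero_carrier] path_rep_diff[OF gen2 fa_gen_carrier]
    path_rep_gen_mult_gen path_rep_gen path_rep_zero word_act_def
  from x show ?thesis
    unfolding lpa_relations_def
  proof (elim UnE CollectE exE conjE)
    fix v assume x_def: "x = fa_diff (fa_gen (GV v)) (fa_sum {e. s e = v} ee_star)"
      and v: "regular s v"
    then have fin: "finite {e. s e = v}" by (simp add: regular_def)
    have "path_rep (fa_sum {e. s e = v} ee_star) \<phi> \<nu> = (\<Sum>e | s e = v. word_act [GE e, GS e] \<phi> \<nu>)"
      by (simp add: path_rep_fa_sum[OF fin ee_star_carrier] ee_star_def path_rep_gen_mult_gen)
    also have "\<dots> = path_rep (fa_gen (GV v)) \<phi> \<nu>"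
    proof (cases \<nu>)
      case Nil
      \<comment> \<open>both sides vanish on the trivial path since \<open>v \<noteq> w\<close>; at \<open>w\<close> itself the relation would fail\<close>
      have "v \<noteq> w" using v w_not_regular by auto
      then show ?thesis by (simp add: Nil rep_simps)
    next
      case (Cons e0 \<mu>)
      have "(\<Sum>e | s e = v. word_act [GE e, GS e] \<phi> \<nu>) =
            (\<Sum>e | s e = v. if e = e0 then (if is_path \<nu> then \<phi> \<nu> else 0) else 0)"
        by (rule sum.cong) (auto simp: Cons rep_simps)
      then show ?thesis using fin by (auto simp: Cons rep_simps)
    qed
    finally show ?thesis
      by (simp add: x_def path_rep_diff[OF fa_gen_carrier fa_sum_carrier[OF fin ee_star_carrier]])
  qed (auto simp: rep_simps split: if_splits list.splits)
qed

end

definition path_rep_kernel :: "('e \<Rightarrow> 'v) \<Rightarrow> ('e \<Rightarrow> 'v) \<Rightarrow> 'v \<Rightarrow> ('v,'e,'k::field) fa set" where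
  "path_rep_kernel s r w = {x \<in> fa_carrier. \<forall>\<phi> \<nu>. path_rep s r w x \<phi> \<nu> = 0}"

lemma ideal_path_rep_kernel: "ideal (path_rep_kernel s r w :: ('v,'e,'k::field) fa set) FA"
proof -
  interpret R: ring "FA :: ('v,'e,'k) fa ring" by (rule ring_FA)
  have neg: "\<ominus>\<^bsub>FA\<^esub> x = fa_diff fa_zero x" if "x \<in> fa_carrier" for x :: "('v,'e,'k) fa"
    using FA_a_minus[OF fa_zero_carrier that] R.a_inv_closed[of x] R.l_zero[of "\<ominus>\<^bsub>FA\<^esub> x"] that
    by (simp add: a_minus_def)
  have zero: "fa_zero \<in> path_rep_kernel s r w"
    by (simp add: path_rep_kernel_def fa_zero_carrier path_rep_zero)
  show ?thesis
  proof (rule idealI[OF ring_FA])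
    show "subgroup (path_rep_kernel s r w) (add_monoid (FA :: ('v,'e,'k) fa ring))"
    proof (rule R.add.subgroupI)
      show "path_rep_kernel s r w \<subseteq> carrier (FA :: ('v,'e,'k) fa ring)"
        by (auto simp: path_rep_kernel_def)
      show "path_rep_kernel s r w \<noteq> {}" using zero by blast
    next
      fix x :: "('v,'e,'k) fa" assume "x \<in> path_rep_kernel s r w"
      then show "\<ominus>\<^bsub>FA\<^esub> x \<in> path_rep_kernel s r w"
        by (simp add: path_rep_kernel_def neg fa_diff_carrier fa_zero_carrier path_rep_diff path_rep_zero)
    next
      fix x y :: "('v,'e,'k) fa" assume "x \<in> path_rep_kernel s r w" "y \<in> path_rep_kernel s r w"
      then show "x \<oplus>\<^bsub>FA\<^esub> y \<in> path_rep_kernel s r w"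
        by (simp add: path_rep_kernel_def fa_add_carrier path_rep_add)
    qed
  next
    fix x y :: "('v,'e,'k) fa" assume x: "x \<in> path_rep_kernel s r w" and y: "y \<in> carrier FA"
    have "path_rep s r w x \<phi> = (\<lambda>_. 0)" for \<phi> using x by (auto simp: path_rep_kernel_def)
    then show "y \<otimes>\<^bsub>FA\<^esub> x \<in> path_rep_kernel s r w"
      using x y by (simp add: path_rep_kernel_def fa_mult_carrier path_rep_mult path_rep_of_zero_fun)
    show "x \<otimes>\<^bsub>FA\<^esub> y \<in> path_rep_kernel s r w"
      using x y by (simp add: path_rep_kernel_def fa_mult_carrier path_rep_mult)
  qed
qed

lemma lpa_ideal_subset_path_rep_kernel:
  assumes "\<not> regular s w"
  shows "lpa_ideal s r \<subseteq> (path_rep_kernel s r w :: ('v,'e,'k::field) fa set)"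
  unfolding lpa_ideal_def
proof (rule ring.genideal_minimal[OF ring_FA ideal_path_rep_kernel])
  show "lpa_relations s r \<subseteq> (path_rep_kernel s r w :: ('v,'e,'k) fa set)"
    using lpa_relations_carrier path_rep_relation[OF assms] by (auto simp: path_rep_kernel_def)
qed

lemma ideal_lpa_ideal: "ideal (lpa_ideal s r :: ('v,'e,'k::field) fa set) FA"
  unfolding lpa_ideal_def
  by (rule ring.genideal_ideal[OF ring_FA]) (simp add: lpa_relations_carrier)

lemma ring_LPA: "ring (LPA s r :: ('v,'e,'k::field) fa set ring)"
  unfolding LPA_def by (rule ideal.quotient_is_ring[OF ideal_lpa_ideal])

lemma ring_hom_ring_lcls:
  "ring_hom_ring FA (LPA s r :: ('v,'e,'k::field) fa set ring) (lcls s r)"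
proof -
  have "lcls s r = (\<lambda>x. lpa_ideal s r +>\<^bsub>FA\<^esub> (x :: ('v,'e,'k) fa))"
    by (simp add: fun_eq_iff lcls_def)
  then show ?thesis
    unfolding LPA_def by (simp add: ideal.rcos_ring_hom_ring[OF ideal_lpa_ideal])
qed

context
  fixes s r :: "'e \<Rightarrow> 'v"
begin

interpretation lcls: ring_hom_ring FA "LPA s r :: ('v,'e,'k::field) fa set ring" "lcls s r"
  by (rule ring_hom_ring_lcls)

lemma lcls_closed: "x \<in> fa_carrier \<Longrightarrow> lcls s r x \<in> carrier (LPA s r :: ('v,'e,'k::field) fa set ring)"
  by simp

lemma lcls_mult:
  "x \<in> fa_carrier \<Longrightarrow> y \<in> fa_carrier \<Longrightarrow>
     lcls s r (fa_mult x y) = lcls s r x \<otimes>\<^bsub>LPA s r\<^esub> (lcls s r y :: ('v,'e,'k::field) fa set)"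
  using lcls.hom_mult[of x y] by simp

lemma lcls_add:
  "x \<in> fa_carrier \<Longrightarrow> y \<in> fa_carrier \<Longrightarrow>
     lcls s r (fa_add x y) = lcls s r x \<oplus>\<^bsub>LPA s r\<^esub> (lcls s r y :: ('v,'e,'k::field) fa set)"
  using lcls.hom_add[of x y] by simp

lemma lcls_one: "lcls s r fa_one = (\<one>\<^bsub>LPA s r\<^esub> :: ('v,'e,'k::field) fa set)"
  using lcls.hom_one by simp

lemma lcls_zero: "lcls s r fa_zero = (\<zero>\<^bsub>LPA s r\<^esub> :: ('v,'e,'k::field) fa set)"
  using lcls.hom_zero by simp

lemma lcls_diff:
  assumes "x \<in> fa_carrier" "y \<in> fa_carrier"
  shows "lcls s r (fa_diff x y) = lcls s r x \<ominus>\<^bsub>LPA s r\<^esub> (lcls s r y :: ('v,'e,'k::field) fa set)"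
  using assms lcls.hom_add[of x "\<ominus>\<^bsub>FA\<^esub> y"] lcls.hom_a_inv[of y] lcls.R.a_inv_closed[of y]
  by (simp add: FA_a_minus[symmetric] a_minus_def)

lemma lcls_fa_sum:
  "finite A \<Longrightarrow> (\<And>i. i \<in> A \<Longrightarrow> g i \<in> fa_carrier) \<Longrightarrow>
     lcls s r (fa_sum A g) = (\<Oplus>\<^bsub>LPA s r\<^esub>i\<in>A. lcls s r (g i) :: ('v,'e,'k::field) fa set)"
proof (induction A rule: finite_induct)
  case empty
  have "fa_sum {} g = fa_zero" by (simp add: fa_sum_def fa_zero_def)
  then show ?case by (simp add: lcls_zero)
next
  case (insert i A)
  have "fa_sum (insert i A) g = fa_add (g i) (fa_sum A g)"
    using insert.hyps by (simp add: fa_sum_def fa_add_def)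
  then show ?case
    using insert by (simp add: lcls_add fa_sum_carrier lcls.S.finsum_insert Pi_def)
qed

lemma lcls_eq_of_relation:
  assumes "fa_diff x y \<in> lpa_relations s r" "x \<in> fa_carrier" "y \<in> fa_carrier"
  shows "lcls s r x = (lcls s r y :: ('v,'e,'k::field) fa set)"
proof -
  have "x \<ominus>\<^bsub>FA\<^esub> y \<in> lpa_ideal s r"
    using assms lpa_relations_carrier unfolding lpa_ideal_def FA_a_minus[OF assms(2,3)]
    by (intro ring.genideal_self[OF ring_FA, THEN subsetD]) auto
  moreover have "x \<in> carrier FA" "y \<in> carrier FA" using assms(2,3) by simp_all
  ultimately show ?thesis
    unfolding lcls_def
    by (intro iffD1[OF ring.quotient_eq_iff_same_a_r_cos[OF ring_FA ideal_lpa_ideal]])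
qed

lemma LPA_carrier_lcls:
  assumes "Z \<in> carrier (LPA s r :: ('v,'e,'k::field) fa set ring)"
  obtains x where "x \<in> fa_carrier" "Z = lcls s r x"
proof -
  from assms obtain x where "x \<in> carrier (FA :: ('v,'e,'k) fa ring)"
      "Z = lpa_ideal s r +>\<^bsub>FA\<^esub> x"
    by (auto simp: LPA_def FactRing_def A_RCOSETS_def RCOSETS_def a_r_coset_def)
  then show ?thesis using that by (simp add: lcls_def)
qed

end

context
  fixes s r :: "'e \<Rightarrow> 'v"
begin

lemma lvert_closed: "lvert s r v \<in> carrier (LPA s r :: ('v,'e,'k::field) fa set ring)"
  and ledge_closed: "ledge s r e \<in> carrier (LPA s r :: ('v,'e,'k::field) fa set ring)"
  and lghost_closed: "lghost s r e \<in> carrier (LPA s r :: ('v,'e,'k::field) fa set ring)"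
  by (simp_all add: lvert_def ledge_def lghost_def lcls_closed fa_gen_carrier)

lemma lcls_gen_mult_gen:
  assumes "fa_diff (fa_mult (fa_gen a) (fa_gen b)) c \<in> lpa_relations s r" "c \<in> fa_carrier"
  shows "lcls s r (fa_gen a) \<otimes>\<^bsub>LPA s r\<^esub> lcls s r (fa_gen b) = (lcls s r c :: ('v,'e,'k::field) fa set)"
  using lcls_eq_of_relation[OF assms(1) _ assms(2)]
  by (simp add: lcls_mult[symmetric] fa_gen_carrier fa_mult_carrier)

lemma lvert_mult_lvert:
  "lvert s r v \<otimes>\<^bsub>LPA s r\<^esub> lvert s r v' =
     (if v = v' then lvert s r v else (\<zero>\<^bsub>LPA s r\<^esub> :: ('v,'e,'k::field) fa set))"
proof -
  have "fa_diff (fa_mult (fa_gen (GV v)) (fa_gen (GV v'))) (if v = v' then fa_gen (GV v) else fa_zero)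
      \<in> lpa_relations s r"
    unfolding lpa_relations_def by blast
  from lcls_gen_mult_gen[OF this] show ?thesis
    by (cases "v = v'") (simp_all add: lvert_def fa_gen_carrier fa_zero_carrier lcls_zero)
qed

lemma lvert_mult_ledge: "lvert s r (s e) \<otimes>\<^bsub>LPA s r\<^esub> ledge s r e = (ledge s r e :: ('v,'e,'k::field) fa set)"
proof -
  have "fa_diff (fa_mult (fa_gen (GV (s e))) (fa_gen (GE e))) (fa_gen (GE e)) \<in> lpa_relations s r"
    unfolding lpa_relations_def by blast
  from lcls_gen_mult_gen[OF this] show ?thesis by (simp add: lvert_def ledge_def fa_gen_carrier)
qed

lemma ledge_mult_lvert: "ledge s r e \<otimes>\<^bsub>LPA s r\<^esub> lvert s r (r e) = (ledge s r e :: ('v,'e,'k::field) fa set)"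
proof -
  have "fa_diff (fa_mult (fa_gen (GE e)) (fa_gen (GV (r e)))) (fa_gen (GE e)) \<in> lpa_relations s r"
    unfolding lpa_relations_def by blast
  from lcls_gen_mult_gen[OF this] show ?thesis by (simp add: lvert_def ledge_def fa_gen_carrier)
qed

lemma lvert_mult_lghost: "lvert s r (r e) \<otimes>\<^bsub>LPA s r\<^esub> lghost s r e = (lghost s r e :: ('v,'e,'k::field) fa set)"
proof -
  have "fa_diff (fa_mult (fa_gen (GV (r e))) (fa_gen (GS e))) (fa_gen (GS e)) \<in> lpa_relations s r"
    unfolding lpa_relations_def by blast
  from lcls_gen_mult_gen[OF this] show ?thesis by (simp add: lvert_def lghost_def fa_gen_carrier)
qed

lemma lghost_mult_lvert: "lghost s r e \<otimes>\<^bsub>LPA s r\<^esub> lvert s r (s e) = (lghost s r e :: ('v,'e,'k::field) fa set)"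
proof -
  have "fa_diff (fa_mult (fa_gen (GS e)) (fa_gen (GV (s e)))) (fa_gen (GS e)) \<in> lpa_relations s r"
    unfolding lpa_relations_def by blast
  from lcls_gen_mult_gen[OF this] show ?thesis by (simp add: lvert_def lghost_def fa_gen_carrier)
qed

lemma lghost_mult_ledge:
  "lghost s r e \<otimes>\<^bsub>LPA s r\<^esub> ledge s r e' =
     (if e = e' then lvert s r (r e) else (\<zero>\<^bsub>LPA s r\<^esub> :: ('v,'e,'k::field) fa set))"
proof -
  have "fa_diff (fa_mult (fa_gen (GS e)) (fa_gen (GE e'))) (if e = e' then fa_gen (GV (r e)) else fa_zero)
      \<in> lpa_relations s r"
    unfolding lpa_relations_def by blast
  from lcls_gen_mult_gen[OF this] show ?thesis
    by (cases "e = e'") (simp_all add: lvert_def ledge_def lghost_def fa_gen_carrier fa_zero_carrier lcls_zero)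
qed

lemma lghost_mult_lvert_if:
  "lghost s r f \<otimes>\<^bsub>LPA s r\<^esub> lvert s r v =
     (if s f = v then lghost s r f else (\<zero>\<^bsub>LPA s r\<^esub> :: ('v,'e,'k::field) fa set))"
proof (cases "s f = v")
  case False
  interpret L: ring "LPA s r :: ('v,'e,'k) fa set ring" by (rule ring_LPA)
  have "lghost s r f \<otimes>\<^bsub>LPA s r\<^esub> lvert s r v =
      lghost s r f \<otimes>\<^bsub>LPA s r\<^esub> (lvert s r (s f) \<otimes>\<^bsub>LPA s r\<^esub> (lvert s r v :: ('v,'e,'k) fa set))"
    by (simp only: L.m_assoc[symmetric] lghost_closed lvert_closed lghost_mult_lvert)
  also have "\<dots> = \<zero>\<^bsub>LPA s r\<^esub>"
    using False by (simp add: lvert_mult_lvert lghost_closed)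
  finally show ?thesis using False by simp
qed (use lghost_mult_lvert[of f] in simp)

lemma lvert_mult_ledge_if:
  "lvert s r v \<otimes>\<^bsub>LPA s r\<^esub> ledge s r f =
     (if s f = v then ledge s r f else (\<zero>\<^bsub>LPA s r\<^esub> :: ('v,'e,'k::field) fa set))"
proof (cases "s f = v")
  case False
  interpret L: ring "LPA s r :: ('v,'e,'k) fa set ring" by (rule ring_LPA)
  have "lvert s r v \<otimes>\<^bsub>LPA s r\<^esub> ledge s r f =
      (lvert s r v \<otimes>\<^bsub>LPA s r\<^esub> lvert s r (s f)) \<otimes>\<^bsub>LPA s r\<^esub> (ledge s r f :: ('v,'e,'k) fa set)"
    by (simp only: L.m_assoc ledge_closed lvert_closed lvert_mult_ledge)
  also have "\<dots> = \<zero>\<^bsub>LPA s r\<^esub>"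
    using False by (simp add: lvert_mult_lvert ledge_closed)
  finally show ?thesis using False by simp
qed (use lvert_mult_ledge[of f] in simp)

lemma vH_eq_finsum:
  assumes fin: "finite {e. s e = w \<and> r e \<notin> H}"
  shows "vH s r H w = lvert s r w \<ominus>\<^bsub>LPA s r\<^esub>
    (\<Oplus>\<^bsub>LPA s r\<^esub>e\<in>{e. s e = w \<and> r e \<notin> H}. ledge s r e \<otimes>\<^bsub>LPA s r\<^esub> lghost s r e :: ('v,'e,'k::field) fa set)"
proof -
  let ?T = "{e. s e = w \<and> r e \<notin> H}"
  have sum_carrier: "fa_sum ?T ee_star \<in> (fa_carrier :: ('v,'e,'k) fa set)"
    by (rule fa_sum_carrier[OF fin ee_star_carrier])
  have "lcls s r (fa_sum ?T ee_star) =
      (\<Oplus>\<^bsub>LPA s r\<^esub>e\<in>?T. ledge s r e \<otimes>\<^bsub>LPA s r\<^esub> (lghost s r e :: ('v,'e,'k) fa set))"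
    unfolding lcls_fa_sum[OF fin ee_star_carrier] ee_star_def ledge_def lghost_def
    by (simp add: lcls_mult fa_gen_carrier)
  then show ?thesis
    unfolding vH_def lvert_def by (simp add: lcls_diff[OF fa_gen_carrier sum_carrier])
qed

lemma lghost_mult_vH:
  assumes fin: "finite {e. s e = w \<and> r e \<notin> H}" and f: "r f \<notin> H"
  shows "lghost s r f \<otimes>\<^bsub>LPA s r\<^esub> vH s r H w = (\<zero>\<^bsub>LPA s r\<^esub> :: ('v,'e,'k::field) fa set)"
proof -
  interpret L: ring "LPA s r :: ('v,'e,'k) fa set ring" by (rule ring_LPA)
  let ?T = "{e. s e = w \<and> r e \<notin> H}"
  let ?S = "\<Oplus>\<^bsub>LPA s r\<^esub>e\<in>?T. ledge s r e \<otimes>\<^bsub>LPA s r\<^esub> (lghost s r e :: ('v,'e,'k) fa set)"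
  have closed: "lghost s r f \<in> carrier (LPA s r)" "?S \<in> carrier (LPA s r)"
    by (auto simp: lghost_closed ledge_closed intro!: L.finsum_closed)
  have "lghost s r f \<otimes>\<^bsub>LPA s r\<^esub> vH s r H w =
      lghost s r f \<otimes>\<^bsub>LPA s r\<^esub> lvert s r w \<ominus>\<^bsub>LPA s r\<^esub> lghost s r f \<otimes>\<^bsub>LPA s r\<^esub> ?S"
    unfolding vH_eq_finsum[OF fin] by (rule L.r_diff_distr[OF lvert_closed closed(2,1)])
  also have "lghost s r f \<otimes>\<^bsub>LPA s r\<^esub> ?S =
      (\<Oplus>\<^bsub>LPA s r\<^esub>e\<in>?T. lghost s r f \<otimes>\<^bsub>LPA s r\<^esub> (ledge s r e \<otimes>\<^bsub>LPA s r\<^esub> lghost s r e))"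
    using fin by (intro L.finsum_rdistr) (auto simp: lghost_closed ledge_closed)
  also have "\<dots> = (\<Oplus>\<^bsub>LPA s r\<^esub>e\<in>?T. if f = e then lghost s r e else \<zero>\<^bsub>LPA s r\<^esub>)"
    by (intro L.finsum_cong')
      (auto simp: L.m_assoc[symmetric] lghost_closed ledge_closed lghost_mult_ledge lvert_mult_lghost)
  also have "\<dots> = lghost s r f \<otimes>\<^bsub>LPA s r\<^esub> lvert s r w"
    using fin f by (simp add: L.finsum_if_eq lghost_closed lghost_mult_lvert_if)
  finally show ?thesis
    by (simp add: a_minus_def L.r_neg[OF L.m_closed[OF closed(1) lvert_closed]])
qed

lemma vH_mult_ledge:
  assumes fin: "finite {e. s e = w \<and> r e \<notin> H}" and f: "r f \<notin> H"
  shows "vH s r H w \<otimes>\<^bsub>LPA s r\<^esub> ledge s r f = (\<zero>\<^bsub>LPA s r\<^esub> :: ('v,'e,'k::field) fa set)"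
proof -
  interpret L: ring "LPA s r :: ('v,'e,'k) fa set ring" by (rule ring_LPA)
  let ?T = "{e. s e = w \<and> r e \<notin> H}"
  let ?S = "\<Oplus>\<^bsub>LPA s r\<^esub>e\<in>?T. ledge s r e \<otimes>\<^bsub>LPA s r\<^esub> (lghost s r e :: ('v,'e,'k) fa set)"
  have closed: "ledge s r f \<in> carrier (LPA s r)" "?S \<in> carrier (LPA s r)"
    by (auto simp: lghost_closed ledge_closed intro!: L.finsum_closed)
  have "vH s r H w \<otimes>\<^bsub>LPA s r\<^esub> ledge s r f =
      lvert s r w \<otimes>\<^bsub>LPA s r\<^esub> ledge s r f \<ominus>\<^bsub>LPA s r\<^esub> ?S \<otimes>\<^bsub>LPA s r\<^esub> ledge s r f"
    unfolding vH_eq_finsum[OF fin] by (rule L.l_diff_distr[OF lvert_closed closed(2,1)])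
  also have "?S \<otimes>\<^bsub>LPA s r\<^esub> ledge s r f =
      (\<Oplus>\<^bsub>LPA s r\<^esub>e\<in>?T. (ledge s r e \<otimes>\<^bsub>LPA s r\<^esub> lghost s r e) \<otimes>\<^bsub>LPA s r\<^esub> ledge s r f)"
    using fin by (intro L.finsum_ldistr) (auto simp: lghost_closed ledge_closed)
  also have "\<dots> = (\<Oplus>\<^bsub>LPA s r\<^esub>e\<in>?T. if f = e then ledge s r e else \<zero>\<^bsub>LPA s r\<^esub>)"
    by (intro L.finsum_cong')
      (auto simp: L.m_assoc lghost_closed ledge_closed lghost_mult_ledge ledge_mult_lvert)
  also have "\<dots> = lvert s r w \<otimes>\<^bsub>LPA s r\<^esub> ledge s r f"
    using fin f by (simp add: L.finsum_if_eq ledge_closed lvert_mult_ledge_if)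
  finally show ?thesis
    by (simp add: a_minus_def L.r_neg[OF L.m_closed[OF lvert_closed closed(1)]])
qed

end

text \<open>Since every element of the ideal of relations acts trivially, the path representation
  descends to \<open>L\<^sub>K(E)\<close>; any representative of a class may be used.\<close>

definition lpa_act :: "('e \<Rightarrow> 'v) \<Rightarrow> ('e \<Rightarrow> 'v) \<Rightarrow> 'v \<Rightarrow> ('v,'e,'k::field) fa set \<Rightarrow>
    ('e list \<Rightarrow> 'k) \<Rightarrow> 'e list \<Rightarrow> 'k" where
  "lpa_act s r w Z = path_rep s r w (SOME x. x \<in> Z)"

context
  fixes s r :: "'e \<Rightarrow> 'v" and w :: 'v
  assumes w_not_regular: "\<not> regular s w"
begin

lemma lpa_act_lcls:
  assumes x: "x \<in> fa_carrier"
  shows "lpa_act s r w (lcls s r x) = path_rep s r w (x :: ('v,'e,'k::field) fa)"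
proof -
  interpret I: ideal "lpa_ideal s r" "FA :: ('v,'e,'k) fa ring" by (rule ideal_lpa_ideal)
  have "x \<in> lcls s r x"
    using I.a_rcos_self x by (simp add: lcls_def)
  then have "(SOME y. y \<in> lcls s r x) \<in> lcls s r x" by (metis someI)
  then obtain h where h: "h \<in> lpa_ideal s r" and some: "(SOME y. y \<in> lcls s r x) = fa_add h x"
    by (auto simp: lcls_def a_r_coset_def')
  have "h \<in> path_rep_kernel s r w"
    using h lpa_ideal_subset_path_rep_kernel[OF w_not_regular] by blast
  then have h_carrier: "h \<in> fa_carrier" and h_acts_trivially: "\<And>\<phi> \<nu>. path_rep s r w h \<phi> \<nu> = 0"
    by (simp_all add: path_rep_kernel_def)
  show ?thesis
    by (intro ext) (simp add: lpa_act_def some path_rep_add[OF h_carrier x] h_acts_trivially)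
qed

lemma lpa_act_mult:
  fixes Y Z :: "('v,'e,'k::field) fa set"
  assumes "Y \<in> carrier (LPA s r)" "Z \<in> carrier (LPA s r)"
  shows "lpa_act s r w (Y \<otimes>\<^bsub>LPA s r\<^esub> Z) \<phi> = lpa_act s r w Y (lpa_act s r w Z \<phi>)"
proof -
  obtain y where "y \<in> fa_carrier" "Y = lcls s r y" using assms(1) by (rule LPA_carrier_lcls)
  moreover obtain z where "z \<in> fa_carrier" "Z = lcls s r z" using assms(2) by (rule LPA_carrier_lcls)
  ultimately show ?thesis
    by (simp add: lcls_mult[symmetric] lpa_act_lcls fa_mult_carrier fun_eq_iff path_rep_mult)
qed

lemma lpa_act_add:
  fixes Y Z :: "('v,'e,'k::field) fa set"
  assumes "Y \<in> carrier (LPA s r)" "Z \<in> carrier (LPA s r)"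
  shows "lpa_act s r w (Y \<oplus>\<^bsub>LPA s r\<^esub> Z) \<phi> \<nu> = lpa_act s r w Y \<phi> \<nu> + lpa_act s r w Z \<phi> \<nu>"
proof -
  obtain y where "y \<in> fa_carrier" "Y = lcls s r y" using assms(1) by (rule LPA_carrier_lcls)
  moreover obtain z where "z \<in> fa_carrier" "Z = lcls s r z" using assms(2) by (rule LPA_carrier_lcls)
  ultimately show ?thesis
    by (simp add: lcls_add[symmetric] lpa_act_lcls fa_add_carrier path_rep_add)
qed

lemma lpa_act_one: "lpa_act s r w (\<one>\<^bsub>LPA s r\<^esub> :: ('v,'e,'k::field) fa set) \<phi> = \<phi>"
  by (simp add: lcls_one[symmetric] lpa_act_lcls fa_one_carrier fun_eq_iff path_rep_one)

lemma lpa_act_one_add_two_mult: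
  fixes P Q :: "('v,'e,'k::field) fa set"
  assumes P: "P \<in> carrier (LPA s r)" and Q: "Q \<in> carrier (LPA s r)"
  shows "lpa_act s r w (\<one>\<^bsub>LPA s r\<^esub> \<oplus>\<^bsub>LPA s r\<^esub> (\<one>\<^bsub>LPA s r\<^esub> \<oplus>\<^bsub>LPA s r\<^esub> \<one>\<^bsub>LPA s r\<^esub>)
      \<otimes>\<^bsub>LPA s r\<^esub> P \<otimes>\<^bsub>LPA s r\<^esub> Q) \<phi> \<nu> =
    \<phi> \<nu> + 2 * lpa_act s r w P (lpa_act s r w Q \<phi>) \<nu>"
proof -
  interpret L: ring "LPA s r :: ('v,'e,'k) fa set ring" by (rule ring_LPA)
  let ?two = "\<one>\<^bsub>LPA s r\<^esub> \<oplus>\<^bsub>LPA s r\<^esub> (\<one>\<^bsub>LPA s r\<^esub> :: ('v,'e,'k) fa set)"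
  have two: "?two \<in> carrier (LPA s r)" by (intro L.a_closed L.one_closed)
  have two_P: "?two \<otimes>\<^bsub>LPA s r\<^esub> P \<in> carrier (LPA s r)" by (rule L.m_closed[OF two P])
  have two_act: "lpa_act s r w ?two \<psi> \<nu> = 2 * \<psi> \<nu>" for \<psi>
    using lpa_act_add[OF L.one_closed L.one_closed, of \<psi> \<nu>] by (simp only: lpa_act_one mult_2)
  have "lpa_act s r w (\<one>\<^bsub>LPA s r\<^esub> \<oplus>\<^bsub>LPA s r\<^esub> ?two \<otimes>\<^bsub>LPA s r\<^esub> P \<otimes>\<^bsub>LPA s r\<^esub> Q) \<phi> \<nu> =
      \<phi> \<nu> + lpa_act s r w (?two \<otimes>\<^bsub>LPA s r\<^esub> P \<otimes>\<^bsub>LPA s r\<^esub> Q) \<phi> \<nu>"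
    using lpa_act_add[OF L.one_closed L.m_closed[OF two_P Q], of \<phi> \<nu>] by (simp only: lpa_act_one)
  then show ?thesis
    by (simp only: lpa_act_mult[OF two_P Q] lpa_act_mult[OF two P] two_act)
qed

end

section \<open>Two units generating a free group\<close>

locale edge_into_breaking_vertex =
  fixes s r :: "'e \<Rightarrow> 'v" and H :: "'v set" and w :: 'v and f :: 'e
  assumes w_not_regular: "\<not> regular s w"
    and finite_exits: "finite {e. s e = w \<and> r e \<notin> H}"
    and range_f: "r f = w" and w_notin_H: "w \<notin> H"
begin

definition span_vec :: "'k \<Rightarrow> 'k \<Rightarrow> 'e list \<Rightarrow> 'k::field" where
  "span_vec c d = (\<lambda>\<nu>. if \<nu> = [] then c else if \<nu> = [f] then d else 0)"

lemma span_vec_eq_iff: "span_vec c d = span_vec c' d' \<longleftrightarrow> c = c' \<and> d = d'"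
proof
  assume "span_vec c d = span_vec c' d'"
  then have "span_vec c d [] = span_vec c' d' []" "span_vec c d [f] = span_vec c' d' [f]" by auto
  then show "c = c' \<and> d = d'" by (simp add: span_vec_def)
qed simp

lemma vH_closed: "vH s r H w \<in> carrier (LPA s r :: ('v,'e,'k::field) fa set ring)"
  unfolding vH_def
  by (intro lcls_closed fa_diff_carrier fa_gen_carrier fa_sum_carrier finite_exits ee_star_carrier)

lemma lpa_act_lghost: "lpa_act s r w (lghost s r f) (span_vec c d) = span_vec d (0::'k::field)"
  by (auto simp: fun_eq_iff lghost_def lpa_act_lcls[OF w_not_regular] fa_gen_carrier path_rep_gen
      word_act_def span_vec_def range_f)

lemma lpa_act_ledge: "lpa_act s r w (ledge s r f) (span_vec c 0) = span_vec 0 (c::'k::field)"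
  by (auto simp: fun_eq_iff ledge_def lpa_act_lcls[OF w_not_regular] fa_gen_carrier path_rep_gen
      word_act_def span_vec_def range_f split: list.splits)

lemma lpa_act_vH: "lpa_act s r w (vH s r H w) (span_vec c d) = span_vec c (0::'k::field)"
proof -
  let ?T = "{e. s e = w \<and> r e \<notin> H}"
  have "path_rep s r w (fa_sum ?T ee_star) \<phi> \<nu> = (\<Sum>e\<in>?T. word_act s r w [GE e, GS e] \<phi> \<nu>)"
    for \<phi> :: "'e list \<Rightarrow> 'k" and \<nu>
    by (simp add: path_rep_fa_sum[OF finite_exits ee_star_carrier] ee_star_def path_rep_gen_mult_gen)
  then have rep: "lpa_act s r w (vH s r H w) \<phi> \<nu> =
      word_act s r w [GV w] \<phi> \<nu> - (\<Sum>e\<in>?T. word_act s r w [GE e, GS e] \<phi> \<nu>)"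
    for \<phi> :: "'e list \<Rightarrow> 'k" and \<nu>
    unfolding vH_def
    by (simp add: lpa_act_lcls[OF w_not_regular] fa_diff_carrier fa_gen_carrier fa_sum_carrier
        finite_exits ee_star_carrier path_rep_diff path_rep_gen)
  note rep = rep[unfolded word_act_vertex word_act_edge_ghost]
  \<comment> \<open>\<open>f\<close> is one of the edges subtracted in \<open>w\<^sup>H\<close> exactly when it starts at \<open>w\<close>\<close>
  have at_f: "lpa_act s r w (vH s r H w) (span_vec c d) [f] = 0"
    using finite_exits range_f w_notin_H by (simp add: rep span_vec_def sum.delta')
  have off_f: "lpa_act s r w (vH s r H w) (span_vec c d) \<nu> = span_vec c 0 \<nu>" if "\<nu> \<noteq> [f]" for \<nu>
    using that by (auto simp: rep span_vec_def list.case_eq_if)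
  show ?thesis
  proof
    fix \<nu>
    show "lpa_act s r w (vH s r H w) (span_vec c d) \<nu> = span_vec c 0 \<nu>"
    proof (cases "\<nu> = [f]")
      case True
      then show ?thesis using at_f by (simp add: span_vec_def)
    qed (rule off_f)
  qed
qed

lemma lpa_act_a:
  "lpa_act s r w (\<one>\<^bsub>LPA s r\<^esub> \<oplus>\<^bsub>LPA s r\<^esub> (\<one>\<^bsub>LPA s r\<^esub> \<oplus>\<^bsub>LPA s r\<^esub> \<one>\<^bsub>LPA s r\<^esub>)
      \<otimes>\<^bsub>LPA s r\<^esub> vH s r H w \<otimes>\<^bsub>LPA s r\<^esub> lghost s r f) (span_vec c d) = span_vec (c + 2 * d) (d::'k::field)"
  by (simp add: fun_eq_iff lpa_act_one_add_two_mult[OF w_not_regular] vH_closed lghost_closed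
      lpa_act_lghost lpa_act_vH) (simp add: span_vec_def)

lemma lpa_act_b:
  "lpa_act s r w (\<one>\<^bsub>LPA s r\<^esub> \<oplus>\<^bsub>LPA s r\<^esub> (\<one>\<^bsub>LPA s r\<^esub> \<oplus>\<^bsub>LPA s r\<^esub> \<one>\<^bsub>LPA s r\<^esub>)
      \<otimes>\<^bsub>LPA s r\<^esub> ledge s r f \<otimes>\<^bsub>LPA s r\<^esub> vH s r H w) (span_vec c d) = span_vec c (d + 2 * c::'k::field)"
  by (simp add: fun_eq_iff lpa_act_one_add_two_mult[OF w_not_regular] vH_closed ledge_closed
      lpa_act_ledge lpa_act_vH) (simp add: span_vec_def)

lemma free_noncyclic_unit_group:
  "let L = (LPA s r :: ('v,'e,'k::field_char_0) fa set ring);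
       a = \<one>\<^bsub>L\<^esub> \<oplus>\<^bsub>L\<^esub> (\<one>\<^bsub>L\<^esub> \<oplus>\<^bsub>L\<^esub> \<one>\<^bsub>L\<^esub>) \<otimes>\<^bsub>L\<^esub> vH s r H w \<otimes>\<^bsub>L\<^esub> lghost s r f;
       b = \<one>\<^bsub>L\<^esub> \<oplus>\<^bsub>L\<^esub> (\<one>\<^bsub>L\<^esub> \<oplus>\<^bsub>L\<^esub> \<one>\<^bsub>L\<^esub>) \<otimes>\<^bsub>L\<^esub> ledge s r f \<otimes>\<^bsub>L\<^esub> vH s r H w;
       U = units_of L;
       G = U\<lparr>carrier := generate U {a, b}\<rparr>
   in a \<in> Units L \<and> b \<in> Units L \<and> is_free_group G \<and> \<not> is_cyclic G"
proof -
  define L where "L = (LPA s r :: ('v,'e,'k) fa set ring)"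
  interpret L: ring L unfolding L_def by (rule ring_LPA)
  define a where "a = \<one>\<^bsub>L\<^esub> \<oplus>\<^bsub>L\<^esub> (\<one>\<^bsub>L\<^esub> \<oplus>\<^bsub>L\<^esub> \<one>\<^bsub>L\<^esub>) \<otimes>\<^bsub>L\<^esub> vH s r H w \<otimes>\<^bsub>L\<^esub> lghost s r f"
  define b where "b = \<one>\<^bsub>L\<^esub> \<oplus>\<^bsub>L\<^esub> (\<one>\<^bsub>L\<^esub> \<oplus>\<^bsub>L\<^esub> \<one>\<^bsub>L\<^esub>) \<otimes>\<^bsub>L\<^esub> ledge s r f \<otimes>\<^bsub>L\<^esub> vH s r H w"
  define U where "U = units_of L"
  define G where "G = U\<lparr>carrier := generate U {a, b}\<rparr>"
  have r_f: "r f \<notin> H" using range_f w_notin_H by simp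
  have aU: "a \<in> Units L" unfolding a_def L_def
    by (intro L.one_add_two_mult_unit_of_square_zero[unfolded L_def] vH_closed lghost_closed
        lghost_mult_vH finite_exits r_f)
  have bU: "b \<in> Units L" unfolding b_def L_def
    by (intro L.one_add_two_mult_unit_of_square_zero[unfolded L_def] vH_closed ledge_closed
        vH_mult_ledge finite_exits r_f)
  interpret U: group U unfolding U_def by (rule L.units_group)
  have abU: "{a, b} \<subseteq> carrier U" using aU bU by (simp add: U_def units_of_carrier)
  have sg: "subgroup (generate U {a, b}) U" by (rule U.generate_is_subgroup[OF abU])
  interpret G: group G unfolding G_def by (rule subgroup.subgroup_is_group[OF sg U.is_group])
  have GU: "carrier G \<subseteq> Units L"
    using subgroup.subset[OF sg] by (simp add: G_def U_def units_of_carrier)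
  have ab: "a \<in> carrier G" "b \<in> carrier G" by (simp_all add: G_def generate.incl)
  have gen: "generate G {a, b} = carrier G"
    unfolding G_def using U.generate_consistent[OF _ sg] by (simp add: generate.incl subsetI)
  let ?R = "lpa_act s r w :: ('v,'e,'k) fa set \<Rightarrow> _"
  let ?\<iota> = "\<lambda>p :: int \<times> int. span_vec (of_int (fst p)) (of_int (snd p)) :: 'e list \<Rightarrow> 'k"
  have R_mult: "?R (x \<otimes>\<^bsub>G\<^esub> y) = ?R x \<circ> ?R y" if "x \<in> carrier G" "y \<in> carrier G" for x y
  proof -
    have "x \<in> carrier L" "y \<in> carrier L" using that GU by (auto simp: Units_def)
    then show ?thesis
      by (simp add: fun_eq_iff G_def U_def units_of_mult L_def lpa_act_mult[OF w_not_regular])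
  qed
  have R_one: "?R \<one>\<^bsub>G\<^esub> = id"
    by (simp add: fun_eq_iff G_def U_def units_of_one L_def lpa_act_one[OF w_not_regular])
  have inj: "inj ?\<iota>"
    by (auto intro!: injI simp: span_vec_eq_iff prod_eq_iff)
  have R_a: "?R a (?\<iota> p) = ?\<iota> (sanov_move (True, True) p)"
    and R_b: "?R b (?\<iota> p) = ?\<iota> (sanov_move (True, False) p)" for p
    by (cases p; simp add: a_def b_def L_def lpa_act_a lpa_act_b)+
  note sanov = G.sanov_action_free_noncommuting[OF ab R_mult R_one inj R_a R_b]
  have "free_basis G {a, b}"
    using sanov(1) ab gen unfolding free_basis_def by blast
  then have "is_free_group G"
    using G.is_group unfolding is_free_group_def by blast
  moreover have "\<not> is_cyclic G" by (rule G.not_cyclic_of_noncommuting[OF ab sanov(2)])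
  ultimately show ?thesis
    using aU bU unfolding Let_def L_def a_def b_def U_def G_def by blast
qed

end

theorem theorem4p5:
  fixes s r :: "'e \<Rightarrow> 'v::finite"
    and H :: "'v set" and w :: 'v
    and P :: "('v, 'e, 'k::field_char_0) fa set set"
  assumes hH: "hereditary s r H"
    and sH: "saturated s r H"
    and wB: "w \<in> breaking_vertices s r H"
    and Mw: "Mset s r w = UNIV - H"
    and P_def: "P = IHS s r H (breaking_vertices s r H - {w})"
    and noncomm: "\<exists>x\<in>carrier (LPA s r Quot P). \<exists>y\<in>carrier (LPA s r Quot P).
                    x \<otimes>\<^bsub>LPA s r Quot P\<^esub> y \<noteq> y \<otimes>\<^bsub>LPA s r Quot P\<^esub> x"
  shows "\<exists>f. r f = w \<and>
    (let L = (LPA s r :: ('v, 'e, 'k) fa set ring);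
         a = \<one>\<^bsub>L\<^esub> \<oplus>\<^bsub>L\<^esub> (\<one>\<^bsub>L\<^esub> \<oplus>\<^bsub>L\<^esub> \<one>\<^bsub>L\<^esub>) \<otimes>\<^bsub>L\<^esub> vH s r H w \<otimes>\<^bsub>L\<^esub> lghost s r f;
         b = \<one>\<^bsub>L\<^esub> \<oplus>\<^bsub>L\<^esub> (\<one>\<^bsub>L\<^esub> \<oplus>\<^bsub>L\<^esub> \<one>\<^bsub>L\<^esub>) \<otimes>\<^bsub>L\<^esub> ledge s r f \<otimes>\<^bsub>L\<^esub> vH s r H w;
         U = units_of L;
         G = U\<lparr>carrier := generate U {a, b}\<rparr>
     in a \<in> Units L \<and> b \<in> Units L \<and> is_free_group G \<and> \<not> is_cyclic G)"
proof -
  \<comment> \<open>only the breaking vertex \<open>w\<close> and \<open>M(w) = E\<^sup>0 \<setminus> H\<close> are needed; the other hypotheses are not\<close>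
  have w_not_regular: "\<not> regular s w" and finite_exits: "finite {e. s e = w \<and> r e \<notin> H}"
    and w_notin_H: "w \<notin> H" and "1 \<le> card {e. s e = w \<and> r e \<notin> H}"
    using wB by (auto simp: breaking_vertices_def infinite_emitter_def regular_def)
  then have "0 < card {e. s e = w \<and> r e \<notin> H}" by linarith
  then obtain e where e: "s e = w" "r e \<notin> H" by (auto simp: card_gt_0_iff)
  have "(r e, w) \<in> {(s e, r e) | e. True}\<^sup>*"
    using Mw e(2) by (auto simp: Mset_def geq_path_def path_rel_def)
  with e(1) have "(w, w) \<in> {(s e, r e) | e. True}\<^sup>+" by (auto intro: rtrancl_into_trancl2)
  then obtain f where f: "r f = w" by (auto elim: tranclE)
  interpret edge_into_breaking_vertex s r H w f
    by unfold_locales (use w_not_regular finite_exits f w_notin_H in auto)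
  show ?thesis by (intro exI[of _ f] conjI f free_noncyclic_unit_group)
qed

end
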